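(* For all integers $n\geq 4$, with $x,y,z,y_1,y_2,z_1,z_2,\Phi,f$ as in the context, \[f(n)<\frac{\Phi(x-2y_1+z_2)\,(x^5-x^4-1)\,y^{14}\,(z_2z^4-z^4-1)}{x^7\,(y^{10}-2y_2y^8+y^8+2y_1y^4-2y^4+1)\,z_1z^6}<1.\]
   Context: Let $\mu(m)=\pi\sqrt{m}$. For an integer $n\geq 2$ put $x=\mu(n-1)$, $y=\mu(n)=\sqrt{x^2+\pi^2}$, $z=\mu(n+1)=\sqrt{x^2+2\pi^2}$, and \[f(n)=e^{x-2y+z}\,\frac{y^{14}(x^5-x^4-1)(z^5-z^4-1)}{x^7z^7(y^5-y^4+1)^2}.\] Define \begin{align*} y_2&=x+\frac{\pi^2}{2x}-\frac{\pi^4}{8x^3}+\frac{\pi^6}{16x^5}-\frac{5\pi^8}{128x^7}+\frac{7\pi^{10}}{256x^9},\qquad y_1=y_2-\frac{21\pi^{12}}{1024x^{11}},\\ z_2&=x+\frac{\pi^2}{x}-\frac{\pi^4}{2x^3}+\frac{\pi^6}{2x^5}-\frac{5\pi^8}{8x^7}+\frac{7\pi^{10}}{8x^9},\qquad z_1=z_2-\frac{21\pi^{12}}{16x^{11}}, \end{align*} and $\Phi(t)=1+t+\frac{t^2}{2}+\frac{t^3}{6}+\frac{t^4}{24}+\frac{t^5}{120}+\frac{t^6}{720}$. *)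

theory Defs
  imports Complex_Main
begin

definition mu :: "real \<Rightarrow> real" where
  "mu m = pi * sqrt m"

definition f3p4 :: "nat \<Rightarrow> real" where
  "f3p4 n = (let x = mu (real n - 1); y = mu (real n); z = mu (real n + 1) in
     exp (x - 2*y + z) * (y^14 * (x^5 - x^4 - 1) * (z^5 - z^4 - 1)) /
     (x^7 * z^7 * (y^5 - y^4 + 1)^2))"

definition y2_of :: "real \<Rightarrow> real" where
  "y2_of x = x + pi^2/(2*x) - pi^4/(8*x^3) + pi^6/(16*x^5) - 5*pi^8/(128*x^7) + 7*pi^10/(256*x^9)"

definition y1_of :: "real \<Rightarrow> real" where
  "y1_of x = y2_of x - 21*pi^12/(1024*x^11)"

definition z2_of :: "real \<Rightarrow> real" where
  "z2_of x = x + pi^2/x - pi^4/(2*x^3) + pi^6/(2*x^5) - 5*pi^8/(8*x^7) + 7*pi^10/(8*x^9)"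

definition z1_of :: "real \<Rightarrow> real" where
  "z1_of x = z2_of x - 21*pi^12/(16*x^11)"

definition Phi :: "real \<Rightarrow> real" where
  "Phi t = 1 + t + t^2/2 + t^3/6 + t^4/24 + t^5/120 + t^6/720"

definition bound3p4 :: "nat \<Rightarrow> real" where
  "bound3p4 n = (let x = mu (real n - 1); y = mu (real n); z = mu (real n + 1);
     y1 = y1_of x; y2 = y2_of x; z1 = z1_of x; z2 = z2_of x in
     Phi (x - 2*y1 + z2) * (x^5 - x^4 - 1) * y^14 * (z2 * z^4 - z^4 - 1) /
     (x^7 * (y^10 - 2*y2*y^8 + y^8 + 2*y1*y^4 - 2*y^4 + 1) * z1 * z^6))"

end

theory Submission
  imports Defs "HOL-Analysis.Complex_Transcendental"
begin

text \<open>
  Put \<open>a = (\<pi>/x)\<^sup>2 \<le> 1/3\<close>, so that \<open>y = x \<surd>(1 + a)\<close> and \<open>z = x \<surd>(1 + 2a)\<close>; the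
  values \<open>y\<^sub>1 < y < y\<^sub>2\<close> and \<open>z\<^sub>1 < z < z\<^sub>2\<close> are \<open>x\<close> times Taylor polynomials of
  \<open>\<surd>(1 + b)\<close>, differing by \<open>O(x a\<^sup>6)\<close>.  The first inequality replaces \<open>exp\<close> by its
  Taylor polynomial \<open>\<Phi>\<close>, an upper bound on negative arguments, at the larger exponent
  \<open>x - 2y\<^sub>1 + z\<^sub>2\<close>, and every factor in \<open>y\<close> and \<open>z\<close> by the bracketing values.
  For the second, the exponent is about \<open>-\<pi> a\<^sup>3\<^sup>/\<^sup>2/4\<close>, so \<open>\<Phi>\<close> of it is about
  \<open>1 - (\<pi>/4) a\<^sup>3\<^sup>/\<^sup>2\<close>, which beats \<open>y\<^sup>4/(x\<^sup>2z\<^sup>2) = (1 + a)\<^sup>2/(1 + 2a) \<approx> 1 + a\<^sup>2\<close>.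
  The quintic factors are harmless because \<open>(x - 1)(z - 1) y\<^sup>2 \<le> x z (y - 1)\<^sup>2\<close>
  whenever \<open>x + z \<le> 2y\<close>, and the Taylor brackets cost only a factor \<open>1 + 5a\<^sup>6\<close>.
\<close>

section \<open>Taylor brackets for square roots\<close>

(* The Taylor polynomials of sqrt (1 + b) at 0 of degrees 5 and 6. *)
definition sqrt1p_upper :: "real \<Rightarrow> real" where
  "sqrt1p_upper b = 1 + b/2 - b^2/8 + b^3/16 - 5*b^4/128 + 7*b^5/256"

definition sqrt1p_lower :: "real \<Rightarrow> real" where
  "sqrt1p_lower b = sqrt1p_upper b - 21*b^6/1024"

lemma sqrt1p_upper_sq:
  "sqrt1p_upper b ^ 2 - (1 + b) =
     b^6 * (21/512 - 3*b/256 + 81*b^2/16384 - 35*b^3/16384 + 49*b^4/65536)"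
  unfolding sqrt1p_upper_def by (simp add: power2_eq_square algebra_simps power_numeral_reduce)

lemma sqrt1p_lower_sq:
  "(1 + b) - sqrt1p_lower b ^ 2 =
     b^7 * (33/1024 - 165*b/16384 + 77*b^2/16384 - 77*b^3/32768 + 147*b^4/131072 - 441*b^5/1048576)"
  unfolding sqrt1p_lower_def sqrt1p_upper_def
  by (simp add: power2_eq_square algebra_simps power_numeral_reduce)

lemma sqrt1p_taylor_bounds:
  fixes b :: real
  assumes "0 < b" "b \<le> 2/3"
  shows "0 < sqrt1p_lower b" "sqrt1p_lower b ^ 2 < 1 + b" "1 + b < sqrt1p_upper b ^ 2"
proof -
  have pow_le: "b ^ k \<le> (2/3) ^ k" for k using assms by (intro power_mono) auto
  have "b^2 \<le> 4/9" "b^3 \<le> 8/27" "b^4 \<le> 16/81" "b^5 \<le> 32/243" "b^6 \<le> 64/729"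
    using pow_le[of 2] pow_le[of 3] pow_le[of 4] pow_le[of 5] pow_le[of 6]
    by (simp_all add: power_divide)
  moreover have "0 \<le> b^2" "0 \<le> b^3" "0 \<le> b^4" "0 \<le> b^5"
    using assms by simp_all
  ultimately have
    upper_rest: "0 < 21/512 - 3*b/256 + 81*b^2/16384 - 35*b^3/16384 + 49*b^4/65536" and
    lower_rest: "0 < 33/1024 - 165*b/16384 + 77*b^2/16384 - 77*b^3/32768 + 147*b^4/131072
                     - 441*b^5/1048576" and
    lower_pos: "0 < sqrt1p_lower b"
    using assms unfolding sqrt1p_lower_def sqrt1p_upper_def by linarith+
  show "0 < sqrt1p_lower b" by (fact lower_pos)
  show "sqrt1p_lower b ^ 2 < 1 + b"
    using sqrt1p_lower_sq[of b] lower_rest assms by (smt (verit) mult_pos_pos zero_less_power)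
  show "1 + b < sqrt1p_upper b ^ 2"
    using sqrt1p_upper_sq[of b] upper_rest assms by (smt (verit) mult_pos_pos zero_less_power)
qed

lemma scaled_sqrt1p_bounds:
  fixes x b v :: real
  assumes "0 < x" "0 < b" "b \<le> 2/3" "0 < v" "v^2 = x^2 * (1 + b)"
  shows "x * sqrt1p_lower b < v" "v < x * sqrt1p_upper b"
proof -
  note bounds = sqrt1p_taylor_bounds[OF assms(2,3)]
  have "0 < x^2" using assms by simp
  then have "(x * sqrt1p_lower b)^2 < v^2" "v^2 < (x * sqrt1p_upper b)^2"
    using bounds assms(5) by (simp_all add: power_mult_distrib)
  moreover have "0 \<le> x * sqrt1p_upper b"
  proof -
    have "0 < sqrt1p_upper b"
      using bounds(1) zero_le_power[of b 6] assms(2) unfolding sqrt1p_lower_def by linarith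
    then show ?thesis using assms(1) by simp
  qed
  ultimately show "x * sqrt1p_lower b < v" "v < x * sqrt1p_upper b"
    using assms(4) by (auto intro: power_less_imp_less_base)
qed

lemma taylor_of_eq_sqrt1p:
  fixes x :: real
  assumes "0 < x"
  shows "y2_of x = x * sqrt1p_upper ((pi/x)^2)" "y1_of x = x * sqrt1p_lower ((pi/x)^2)"
    "z2_of x = x * sqrt1p_upper (2*(pi/x)^2)" "z1_of x = x * sqrt1p_lower (2*(pi/x)^2)"
  using assms
  by (simp_all add: y1_of_def y2_of_def z1_of_def z2_of_def sqrt1p_lower_def sqrt1p_upper_def
      field_simps power_mult_distrib power_numeral_reduce)

lemma taylor_gaps:
  fixes x :: real
  assumes "0 < x"
  shows "y2_of x - y1_of x = 21/1024 * x * ((pi/x)^2)^6"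
    and "z2_of x - z1_of x = 21/16 * x * ((pi/x)^2)^6"
  using assms by (simp_all add: y1_of_def z1_of_def field_simps power_mult_distrib power_numeral_reduce)

section \<open>The exponential factor\<close>

lemma exp_less_Phi:
  assumes "t < (0::real)"
  shows "exp t < Phi t"
proof -
  obtain c where c: "exp t = (\<Sum>m<7. t ^ m / fact m) + exp c / fact 7 * t ^ 7"
    using Maclaurin_exp_le[of t 7] by blast
  have "(\<Sum>m<7. t ^ m / fact m) = Phi t"
    by (simp add: Phi_def eval_nat_numeral fact_numeral)
  moreover have "exp c / fact 7 * t ^ 7 < 0"
    using assms by (intro mult_pos_neg) (auto simp: odd_pos power_less_zero_eq)
  ultimately show ?thesis using c by linarith
qed

lemma Phi_le_affine:
  fixes t :: real
  assumes "-4/25 \<le> t" "t \<le> 0"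
  shows "Phi t \<le> 1 + 23/25 * t"
proof -
  have "Phi t - (1 + t + t^2/2) = t^3 * (1/6 + t/24) + t^5 * (1/120 + t/720)"
    unfolding Phi_def by (simp add: algebra_simps power_numeral_reduce power2_eq_square)
  moreover have "t^3 * (1/6 + t/24) \<le> 0" "t^5 * (1/120 + t/720) \<le> 0"
    using assms by (auto intro!: mult_nonpos_nonneg simp: power_le_zero_eq)
  moreover have "t * (t/2) \<le> t * (-2/25)"
    using assms by (intro mult_left_mono_neg) auto
  ultimately show ?thesis by (simp add: power2_eq_square)
qed

definition exponent_poly :: "real \<Rightarrow> real" where
  "exponent_poly a = -1/4 + 3*a/8 - 35*a^2/64 + 105*a^3/128 + 21*a^4/512"

lemma exponent_poly_bounds:
  fixes a :: real
  assumes "0 \<le> a" "a \<le> 1/3"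
  shows "-1/4 \<le> exponent_poly a" "exponent_poly a \<le> -1/4 + 3*a/8 - 13*a^2/50"
proof -
  have "a^2 \<le> 1/9" using power_mono[OF assms(2), of 2] assms(1) by (simp add: power_divide)
  have "0 \<le> a^2" "0 \<le> a^3" "0 \<le> a^4" using assms(1) by simp_all
  have "exponent_poly a + 1/4 = a * (3/8 - 35*a/64) + 105*a^3/128 + 21*a^4/512"
    unfolding exponent_poly_def by (simp add: algebra_simps power2_eq_square)
  moreover have "0 \<le> a * (3/8 - 35*a/64)" using assms by simp
  ultimately show "-1/4 \<le> exponent_poly a" using \<open>0 \<le> a^3\<close> \<open>0 \<le> a^4\<close> by linarith
  have "-1/4 + 3*a/8 - 13*a^2/50 - exponent_poly a
      = a^2 * (35/64 - 13/50 - 105*a/128 - 21*a^2/512)"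
    unfolding exponent_poly_def by (simp add: algebra_simps power_numeral_reduce)
  moreover have "0 \<le> 35/64 - 13/50 - 105*a/128 - 21*a^2/512"
    using assms \<open>a^2 \<le> 1/9\<close> by linarith
  ultimately show "exponent_poly a \<le> -1/4 + 3*a/8 - 13*a^2/50"
    using \<open>0 \<le> a^2\<close> by (metis diff_ge_0_iff_ge mult_nonneg_nonneg)
qed

lemma exponent_eq:
  fixes x :: real
  assumes "0 < x"
  shows "x - 2 * y1_of x + z2_of x = pi * ((pi/x) * (pi/x)^2) * exponent_poly ((pi/x)^2)"
  using assms
  by (simp add: y1_of_def y2_of_def z2_of_def exponent_poly_def field_simps power_mult_distrib
      power_numeral_reduce)

lemma exponent_bounds:
  fixes s a t :: real
  assumes "0 < s" "a = s^2" "a \<le> 1/3" "t = pi * (s*a) * exponent_poly a"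
  shows "-4/25 \<le> t" "t \<le> 157/50 * (s*a) * (-1/4 + 3*a/8 - 13*a^2/50)"
proof -
  have "0 < a" "0 < s*a" using assms(1,2) by simp_all
  have "s^2 < (2887/5000)^2" using assms(2,3) by (simp add: power2_eq_square)
  then have "s < 2887/5000" by (rule power_less_imp_less_base) (use assms(1) in simp)
  then have "s*a \<le> 2887/5000 * a" using \<open>0 < a\<close> by (intro mult_right_mono) simp_all
  then have "s*a \<le> 2887/15000" using assms(3) by linarith
  have "157/50 \<le> pi" "pi \<le> 3927/1250" using pi_approx by simp_all
  note K = exponent_poly_bounds[OF less_imp_le[OF \<open>0 < a\<close>] assms(3)]
  have "pi * (s*a) * (-1/4) \<le> t"
    unfolding assms(4) using K(1) \<open>0 < s*a\<close> by (intro mult_left_mono) simp_all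
  moreover have "pi * (s*a) \<le> 3927/1250 * (2887/15000)"
    using \<open>pi \<le> 3927/1250\<close> \<open>s*a \<le> 2887/15000\<close> \<open>0 < s*a\<close> by (intro mult_mono) simp_all
  ultimately show "-4/25 \<le> t" by linarith
  have "-1/4 + 3*a/8 - 13*a^2/50 \<le> -1/8" using assms(3) zero_le_power2[of a] by linarith
  then have "pi * (s*a) * (-1/4 + 3*a/8 - 13*a^2/50) \<le> 157/50 * (s*a) * (-1/4 + 3*a/8 - 13*a^2/50)"
    using \<open>157/50 \<le> pi\<close> \<open>0 < s*a\<close> by (intro mult_right_mono_neg mult_right_mono) auto
  moreover have "t \<le> pi * (s*a) * (-1/4 + 3*a/8 - 13*a^2/50)"
    unfolding assms(4) using K(2) \<open>0 < s*a\<close> by (intro mult_left_mono) simp_all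
  ultimately show "t \<le> 157/50 * (s*a) * (-1/4 + 3*a/8 - 13*a^2/50)" by linarith
qed

lemma sixth_power_correction_le:
  fixes a :: real
  assumes "0 \<le> a" "a \<le> 1/3"
  shows "(1 + 5*a^6) * (1 + a)^2 \<le> 1 + 2*a + 6/5*a^2"
proof -
  have "a^4 \<le> (1/3)^4" "(1 + a)^2 \<le> (4/3)^2" using assms by (intro power_mono; simp)+
  then have "5*a^4*(1 + a)^2 \<le> 1/5"
    using mult_mono[of "a^4" "1/81" "(1+a)^2" "16/9"] by (simp add: power_divide)
  then have "a^2 * (5*a^4*(1 + a)^2) \<le> a^2 * (1/5)" by (intro mult_left_mono) simp_all
  moreover have "(1 + 5*a^6) * (1 + a)^2 = 1 + 2*a + a^2 + a^2 * (5*a^4*(1 + a)^2)"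
    by (simp add: algebra_simps power_numeral_reduce power2_eq_square)
  ultimately show ?thesis by linarith
qed

lemma affine_exponent_mult_correction_le:
  fixes a :: real
  assumes "0 \<le> a" "a \<le> 1/3"
  shows "(-1/4 + 3*a/8 - 13*a^2/50) * (1 + 2*a + 6/5*a^2) \<le> -1/4"
proof -
  have "-(-1/4 + 3*a/8 - 13*a^2/50) * (1 + 2*a + 6/5*a^2) - 1/4
      = a*(1/8 - 19/100*a) + 7/100*a^3 + 39/125*a^4"
    by (simp add: algebra_simps power_numeral_reduce power2_eq_square)
  moreover have "0 \<le> a*(1/8 - 19/100*a)" "0 \<le> a^3" "0 \<le> a^4" using assms by simp_all
  ultimately show ?thesis by linarith
qed

lemma Phi_exponent_less:
  fixes s a t :: real
  assumes "0 < s" "a = s^2" "a \<le> 1/3" "t = pi * (s*a) * exponent_poly a"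
  shows "t < 0" "Phi t * (1 + 5*a^6) * (1 + a)^2 < 1 + 2*a"
proof -
  define K where "K = -1/4 + 3*a/8 - 13*a^2/50"
  define P where "P = 1 + 2*a + 6/5*a^2"
  note t_bounds = exponent_bounds[OF assms, folded K_def]
  have "0 < a" "0 < s*a" using assms(1,2) by simp_all
  have "K \<le> -1/8" using assms(3) zero_le_power2[of a] K_def by linarith
  then have "157/50 * (s*a) * K < 0" using \<open>0 < s*a\<close> by (simp add: mult_pos_neg)
  then show "t < 0" using t_bounds(2) by linarith
  then have "0 < Phi t" using exp_less_Phi[of t] exp_gt_zero[of t] by linarith
  have "s^2 < (3/5)^2" using assms(2,3) by (simp add: power2_eq_square)
  then have "s < 3/5" by (rule power_less_imp_less_base) simp
  have "K * P \<le> -1/4"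
    using affine_exponent_mult_correction_le[of a] assms(3) \<open>0 < a\<close> K_def P_def by simp
  have "Phi t * (1 + 5*a^6) * (1 + a)^2 \<le> Phi t * P"
    using mult_left_mono[OF sixth_power_correction_le, of a "Phi t"] assms(3) \<open>0 < a\<close> \<open>0 < Phi t\<close>
    unfolding P_def mult.assoc by simp
  also have "\<dots> \<le> (1 + 23/25 * (157/50 * (s*a) * K)) * P"
  proof (rule mult_right_mono)
    show "Phi t \<le> 1 + 23/25 * (157/50 * (s*a) * K)"
      using Phi_le_affine[of t] t_bounds \<open>t < 0\<close> by linarith
    show "0 \<le> P" using \<open>0 < a\<close> P_def by simp
  qed
  also have "\<dots> = P + 3611/1250 * (s*a) * (K*P)" by (simp add: algebra_simps)
  also have "\<dots> \<le> P - 3611/5000 * (s*a)"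
    using mult_left_mono[OF \<open>K * P \<le> -1/4\<close>, of "3611/1250 * (s*a)"] \<open>0 < s*a\<close> by simp
  also have "\<dots> < 1 + 2*a"
  proof -
    (* 6/5 * 3/5 = 18/25 is just below 3611/5000: this is where pi > 3.14 is needed. *)
    have "6/5 * a^2 = 6/5 * s * (s*a)" using assms(2) by (simp add: power2_eq_square)
    also have "\<dots> < 6/5 * (3/5) * (s*a)"
      using mult_strict_right_mono[OF \<open>s < 3/5\<close> \<open>0 < s*a\<close>] by (simp add: mult_ac)
    finally show ?thesis unfolding P_def using \<open>0 < s*a\<close> by linarith
  qed
  finally show "Phi t * (1 + 5*a^6) * (1 + a)^2 < 1 + 2*a" .
qed

section \<open>The rational factor\<close>

lemma quintic_pos:
  fixes x :: real
  assumes "2 \<le> x"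
  shows "0 < x^5 - x^4 - 1"
proof -
  have "16 \<le> x^4" using power_mono[OF assms, of 4] by simp
  then have "16 \<le> x^4 * (x - 1)" using assms mult_mono[of 16 "x^4" 1 "x - 1"] by simp
  then show ?thesis by (simp add: algebra_simps power_numeral_reduce)
qed

lemma pred_mult_pred_le_midpoint:
  fixes x y z :: real
  assumes "1 \<le> x" "1 \<le> z" "x + z \<le> 2*y"
  shows "(x - 1) * (z - 1) * y^2 \<le> x * z * (y - 1)^2"
proof -
  define m where "m = (x + z)/2"
  have "m \<le> y" using assms(3) m_def by simp
  have "x * z * (y - 1)^2 - (x - 1) * (z - 1) * y^2
      = (y - m) * ((x + z - 1) * (y + m) - 2*x*z) + (x - z)^2 * (2*m - 1)/4"
    unfolding m_def by (simp add: power2_eq_square algebra_simps divide_simps)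
  moreover have "2*x*z \<le> (x + z - 1) * (y + m)"
  proof -
    have "(x + z - 1) * (x + z) \<le> (x + z - 1) * (y + m)"
      using \<open>m \<le> y\<close> assms m_def by (intro mult_left_mono) auto
    moreover have "(x + z - 1) * (x + z) - 2*x*z = x * (x - 1) + z * (z - 1)"
      by (simp add: algebra_simps)
    moreover have "0 \<le> x * (x - 1)" "0 \<le> z * (z - 1)" using assms by simp_all
    ultimately show ?thesis by linarith
  qed
  then have "0 \<le> (y - m) * ((x + z - 1) * (y + m) - 2*x*z)" using \<open>m \<le> y\<close> by simp
  moreover have "0 \<le> (x - z)^2 * (2*m - 1)/4" using assms m_def by simp
  ultimately show ?thesis by linarith
qed

lemma quintic_product_le:
  fixes x y z :: real
  assumes "2 \<le> x" "2 \<le> z" "x + z \<le> 2*y"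
  shows "(x^5 - x^4 - 1) * (z^5 - z^4 - 1) * y^10 \<le> x^5 * z^5 * (y^5 - y^4 + 1)^2"
proof -
  have "2 \<le> y" using assms by linarith
  have "(x^5 - x^4 - 1) * (z^5 - z^4 - 1) * y^10 \<le> (x^4 * (x - 1)) * (z^4 * (z - 1)) * y^10"
    using quintic_pos[OF assms(1)] quintic_pos[OF assms(2)] \<open>2 \<le> y\<close>
    by (intro mult_right_mono mult_mono) (auto simp: algebra_simps power_numeral_reduce)
  also have "\<dots> = x^4 * z^4 * y^8 * ((x - 1) * (z - 1) * y^2)"
    by (simp add: algebra_simps power_numeral_reduce)
  also have "\<dots> \<le> x^4 * z^4 * y^8 * (x * z * (y - 1)^2)"
    using pred_mult_pred_le_midpoint[of x z y] assms by (intro mult_left_mono) auto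
  also have "\<dots> = x^5 * z^5 * (y^4 * (y - 1))^2"
    by (simp add: algebra_simps power_numeral_reduce power2_eq_square)
  also have "\<dots> \<le> x^5 * z^5 * (y^5 - y^4 + 1)^2"
    using \<open>2 \<le> y\<close> assms
    by (intro mult_left_mono power_mono) (auto simp: algebra_simps power_numeral_reduce)
  finally show ?thesis .
qed

lemma quintic_sq_lower:
  fixes y :: real
  assumes "5 \<le> y"
  shows "16/25 * y^10 \<le> (y^5 - y^4 + 1)^2"
proof -
  have "y^5 - y^4 + 1 - 4/5 * y^5 = y^4 * (y/5 - 1) + 1"
    by (simp add: algebra_simps power_numeral_reduce)
  moreover have "0 \<le> y^4 * (y/5 - 1)" using assms by simp
  ultimately have "4/5 * y^5 \<le> y^5 - y^4 + 1" by linarith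
  then have "(4/5 * y^5)^2 \<le> (y^5 - y^4 + 1)^2" using assms by (intro power_mono) auto
  then show ?thesis by (simp add: power_mult_distrib power_numeral_reduce)
qed

(* (y^5 - y^4 + 1)^2 expanded, with one factor y of y^9 replaced by an upper bound y2
   and one factor y of y^5 by a lower bound y1. *)
definition perturbed_square :: "real \<Rightarrow> real \<Rightarrow> real \<Rightarrow> real" where
  "perturbed_square y1 y2 y = y^10 - 2*y2*y^8 + y^8 + 2*y1*y^4 - 2*y^4 + 1"

lemma square_minus_perturbed_square:
  "(y^5 - y^4 + 1)^2 - perturbed_square y1 y2 y = 2*y^8*(y2 - y) + 2*y^4*(y - y1)"
  unfolding perturbed_square_def by (simp add: power2_eq_square algebra_simps power_numeral_reduce)

lemma perturbed_square_bounds: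
  fixes x y y1 y2 E :: real
  assumes "5 \<le> y" "0 \<le> x" "x \<le> y" "y1 < y" "y < y2" "0 \<le> E"
    and "y2 - y1 \<le> 21/1024 * x * E"
  shows "(y^5 - y^4 + 1)^2 - 21/2560 * y^10 * E \<le> perturbed_square y1 y2 y"
    and "perturbed_square y1 y2 y < (y^5 - y^4 + 1)^2"
proof -
  have "y^4 \<le> y^8" using assms(1) by (intro power_increasing) auto
  then have "2*y^4*(y - y1) \<le> 2*y^8*(y - y1)" using assms(4) by (intro mult_right_mono) auto
  then have "2*y^8*(y2 - y) + 2*y^4*(y - y1) \<le> 2*y^8*(y2 - y1)" by (simp add: algebra_simps)
  also have "\<dots> \<le> 2*y^8*(21/1024 * x * E)" using assms(7) by (intro mult_left_mono) auto
  also have "\<dots> \<le> 2*y^8*(21/1024 * (y^2/5) * E)"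
  proof -
    have "5*x \<le> y*y" by (rule mult_mono) (use assms in auto)
    then show ?thesis using assms(6) by (intro mult_left_mono mult_right_mono) (auto simp: power2_eq_square)
  qed
  also have "\<dots> = 21/2560 * y^10 * E" by (simp add: power_numeral_reduce)
  finally show "(y^5 - y^4 + 1)^2 - 21/2560 * y^10 * E \<le> perturbed_square y1 y2 y"
    using square_minus_perturbed_square[of y y1 y2] by linarith
  have "0 < 2*y^8*(y2 - y) + 2*y^4*(y - y1)" using assms(1,4,5) by (simp add: add_pos_pos)
  then show "perturbed_square y1 y2 y < (y^5 - y^4 + 1)^2"
    using square_minus_perturbed_square[of y y1 y2] by linarith
qed

lemma correction_factor_bound:
  fixes E W Y :: real
  assumes "0 \<le> E" "E \<le> 1/729" "0 \<le> Y" "16/25 * Y \<le> W"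
  shows "W + 21/16 * Y * E \<le> (1 + 5*E) * (1 - 21/16*E) * (W - 21/2560 * Y * E)"
proof -
  define P where "P = Y * E"
  have "0 \<le> P" "P \<le> Y/729" "E * P \<le> P/729" "16/25 * P \<le> E * W"
    using assms mult_left_mono[OF assms(2,3)] mult_right_mono[OF assms(2), of P]
      mult_left_mono[OF assms(4,1)]
    by (simp_all add: P_def algebra_simps)
  have "W + 21/16 * P \<le> (1 + 18/5*E) * (W - 21/2560 * P)"
  proof -
    have "(1 + 18/5*E) * (W - 21/2560 * P) = W - 21/2560*P + 18/5*(E*W) - 189/6400*(E*P)"
      by (simp add: algebra_simps)
    with \<open>0 \<le> P\<close> \<open>E * P \<le> P/729\<close> \<open>16/25 * P \<le> E * W\<close> show ?thesis by linarith
  qed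
  also have "\<dots> \<le> (1 + 5*E) * (1 - 21/16*E) * (W - 21/2560 * P)"
  proof (rule mult_right_mono)
    have "E * E \<le> 1/729 * E" using mult_right_mono[OF assms(2,1)] .
    moreover have "(1 + 5*E) * (1 - 21/16*E) = 1 + 59/16*E - 105/16*(E*E)"
      by (simp add: field_simps)
    ultimately show "1 + 18/5*E \<le> (1 + 5*E) * (1 - 21/16*E)" using assms(1) by linarith
    show "0 \<le> W - 21/2560 * P" using \<open>P \<le> Y/729\<close> assms(3,4) by linarith
  qed
  finally show ?thesis by (simp add: P_def mult.assoc)
qed

lemma quintic_numerator_le:
  fixes x y z z2 E :: real
  assumes "5 \<le> x" "x \<le> z" "x + z \<le> 2*y" "z < z2" "z2 - z \<le> 21/16 * z * E" "0 \<le> E"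
  shows "(x^5 - x^4 - 1) * y^10 * (z2 * z^4 - z^4 - 1)
           \<le> x^5 * z^4 * (z * ((y^5 - y^4 + 1)^2 + 21/16 * y^10 * E))"
proof -
  define X where "X = x^5 - x^4 - 1"
  have "0 \<le> x^4" using assms(1) by simp
  then have "0 \<le> X" "X \<le> x^5" using quintic_pos[of x] assms(1) unfolding X_def by linarith+
  have "X * y^10 * (z2 * z^4 - z^4 - 1) = X * (z^5 - z^4 - 1) * y^10 + X * y^10 * ((z2 - z) * z^4)"
    by (simp add: algebra_simps power_numeral_reduce)
  also have "\<dots> \<le> x^5 * z^5 * (y^5 - y^4 + 1)^2 + x^5 * y^10 * ((21/16 * z * E) * z^4)"
  proof (rule add_mono)
    show "X * (z^5 - z^4 - 1) * y^10 \<le> x^5 * z^5 * (y^5 - y^4 + 1)^2"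
      using quintic_product_le[of x z y] assms(1-3) X_def by simp
    show "X * y^10 * ((z2 - z) * z^4) \<le> x^5 * y^10 * ((21/16 * z * E) * z^4)"
      using \<open>0 \<le> X\<close> \<open>X \<le> x^5\<close> assms by (intro mult_mono) auto
  qed
  also have "\<dots> = x^5 * z^4 * (z * ((y^5 - y^4 + 1)^2 + 21/16 * y^10 * E))"
    by (simp add: algebra_simps power_numeral_reduce)
  finally show ?thesis unfolding X_def .
qed

lemma numerator_le_perturbed_denominator:
  fixes x y z y1 y2 z1 z2 E :: real
  assumes "5 \<le> x" "x \<le> y" "x \<le> z" "x + z \<le> 2*y"
    and "y1 < y" "y < y2" "z1 < z" "z < z2"
    and "y2 - y1 \<le> 21/1024 * x * E" "z2 - z1 \<le> 21/16 * x * E" "0 \<le> E" "E \<le> 1/729"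
  shows "(x^5 - x^4 - 1) * y^10 * (z2 * z^4 - z^4 - 1)
           \<le> (1 + 5*E) * (x^5 * perturbed_square y1 y2 y * z1 * z^4)"
proof -
  define W where "W = (y^5 - y^4 + 1)^2"
  define Y where "Y = y^10"
  have "5 \<le> y" "5 \<le> z" "0 \<le> Y" using assms(1-3) Y_def by simp_all
  have "16/25 * Y \<le> W" using quintic_sq_lower[OF \<open>5 \<le> y\<close>] W_def Y_def by simp
  have "z * E \<ge> x * E" using assms(3,11) by (intro mult_right_mono)
  then have z2_gap: "z2 - z \<le> 21/16 * z * E" and z1_lower: "z * (1 - 21/16*E) \<le> z1"
    using assms(7,8,10) by (simp_all add: algebra_simps)
  have "(x^5 - x^4 - 1) * y^10 * (z2 * z^4 - z^4 - 1) \<le> x^5 * z^4 * (z * (W + 21/16 * Y * E))"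
    using quintic_numerator_le[OF assms(1,3,4,8) z2_gap assms(11)] W_def Y_def by simp
  also have "\<dots> \<le> x^5 * z^4 * (z * ((1 + 5*E) * (1 - 21/16*E) * (W - 21/2560 * Y * E)))"
    using correction_factor_bound[OF assms(11,12) \<open>0 \<le> Y\<close> \<open>16/25 * Y \<le> W\<close>] \<open>5 \<le> z\<close> assms(1)
    by (intro mult_left_mono) auto
  also have "\<dots> = (1 + 5*E) * (x^5 * ((W - 21/2560 * Y * E) * (z * (1 - 21/16*E))) * z^4)"
    by (simp only: mult_ac)
  also have "\<dots> \<le> (1 + 5*E) * (x^5 * (perturbed_square y1 y2 y * z1) * z^4)"
  proof -
    have "W - 21/2560 * Y * E \<le> perturbed_square y1 y2 y"
      using perturbed_square_bounds(1)[of y x y1 y2 E] assms W_def Y_def \<open>5 \<le> y\<close> by simp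
    moreover have "0 \<le> W - 21/2560 * Y * E" "0 \<le> z * (1 - 21/16*E)"
      using \<open>16/25 * Y \<le> W\<close> \<open>0 \<le> Y\<close> mult_left_mono[OF assms(12) \<open>0 \<le> Y\<close>] assms(12) \<open>5 \<le> z\<close>
      by simp_all
    ultimately show ?thesis
      using z1_lower assms(1,11) \<open>5 \<le> z\<close> by (intro mult_left_mono mult_right_mono mult_mono) auto
  qed
  finally show ?thesis by (simp add: mult.assoc)
qed

section \<open>Three consecutive values of \<open>\<mu>\<close>\<close>

context
  fixes x y z :: real
  assumes x_pos: "0 < x" and x_large: "3*pi^2 \<le> x^2"
    and y_pos: "0 < y" and y_sq: "y^2 = x^2 + pi^2"
    and z_pos: "0 < z" and z_sq: "z^2 = x^2 + 2*pi^2"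
begin

lemma pi_ratio_props:
  "0 < (pi/x)^2" "(pi/x)^2 \<le> 1/3" "y^2 = x^2 * (1 + (pi/x)^2)" "z^2 = x^2 * (1 + 2*(pi/x)^2)"
  using x_pos x_large y_sq z_sq by (simp_all add: power_divide field_simps)

lemma mu_values_ordered: "5 \<le> x" "x \<le> y" "x \<le> z" "x + z \<le> 2*y"
proof -
  have "157/50 \<le> pi" using pi_approx by simp
  then have "(157/50)^2 \<le> pi^2" by (rule power_mono) simp
  then have "5^2 \<le> x^2" using x_large by (simp add: power2_eq_square)
  then show "5 \<le> x" by (rule power2_le_imp_le) (use x_pos in simp)
  have "x^2 \<le> y^2" "x^2 \<le> z^2" using y_sq z_sq by simp_all
  then show "x \<le> y" "x \<le> z" using y_pos z_pos by (auto elim: power2_le_imp_le)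
  have "(x + z)^2 = 2*x^2 + 2*z^2 - (x - z)^2" by (simp add: power2_eq_square algebra_simps)
  also have "\<dots> \<le> (2*y)^2" using y_sq z_sq by (simp add: power_mult_distrib)
  finally show "x + z \<le> 2*y" by (rule power2_le_imp_le) (use y_pos in simp)
qed

lemma taylor_brackets: "y1_of x < y" "y < y2_of x" "z1_of x < z" "z < z2_of x" "0 < z1_of x"
  using scaled_sqrt1p_bounds[OF x_pos, of "(pi/x)^2" y] scaled_sqrt1p_bounds[OF x_pos, of "2*(pi/x)^2" z]
    sqrt1p_taylor_bounds(1)[of "2*(pi/x)^2"] pi_ratio_props y_pos z_pos x_pos
  by (simp_all add: taylor_of_eq_sqrt1p[OF x_pos])

lemma exponent_comparison:
  "x - 2*y + z < x - 2 * y1_of x + z2_of x"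
  "x - 2 * y1_of x + z2_of x < 0"
  "Phi (x - 2 * y1_of x + z2_of x) * (1 + 5*((pi/x)^2)^6) * y^4 < x^2 * z^2"
proof -
  note Phi_less = Phi_exponent_less[of "pi/x" "(pi/x)^2", OF _ refl pi_ratio_props(2) exponent_eq[OF x_pos]]
  show "x - 2*y + z < x - 2 * y1_of x + z2_of x" using taylor_brackets by linarith
  show "x - 2 * y1_of x + z2_of x < 0" using Phi_less x_pos by simp
  have y4: "y^4 = x^4 * (1 + (pi/x)^2)^2" and xz: "x^2 * z^2 = x^4 * (1 + 2*(pi/x)^2)"
    using pi_ratio_props(3,4) by (simp_all add: power_numeral_reduce power2_eq_square algebra_simps)
  have "x^4 * (Phi (x - 2 * y1_of x + z2_of x) * (1 + 5*((pi/x)^2)^6) * (1 + (pi/x)^2)^2)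
      < x^4 * (1 + 2*(pi/x)^2)"
    using Phi_less(2) x_pos by (intro mult_strict_left_mono) simp_all
  then show "Phi (x - 2 * y1_of x + z2_of x) * (1 + 5*((pi/x)^2)^6) * y^4 < x^2 * z^2"
    unfolding y4 xz by (simp add: mult_ac)
qed

lemma ratio_sixth_power_bounds: "0 \<le> ((pi/x)^2)^6" "((pi/x)^2)^6 \<le> 1/729"
  using power_mono[OF pi_ratio_props(2), of 6] by (simp_all add: power_divide)

lemma perturbed_square_range:
  "0 < perturbed_square (y1_of x) (y2_of x) y"
  "perturbed_square (y1_of x) (y2_of x) y < (y^5 - y^4 + 1)^2"
proof -
  have "5 \<le> y" using mu_values_ordered by linarith
  note bounds = perturbed_square_bounds[of y x "y1_of x" "y2_of x" "((pi/x)^2)^6"]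
  have "21/2560 * y^10 * ((pi/x)^2)^6 \<le> 21/2560 * y^10 * (1/729)"
    using ratio_sixth_power_bounds(2) by (intro mult_left_mono) simp_all
  moreover have "(y^5 - y^4 + 1)^2 - 21/2560 * y^10 * ((pi/x)^2)^6 \<le> perturbed_square (y1_of x) (y2_of x) y"
    "perturbed_square (y1_of x) (y2_of x) y < (y^5 - y^4 + 1)^2"
    using bounds \<open>5 \<le> y\<close> mu_values_ordered x_pos taylor_brackets taylor_gaps[OF x_pos]
      ratio_sixth_power_bounds
    by simp_all
  moreover have "0 < y^10" using y_pos by simp
  ultimately show "0 < perturbed_square (y1_of x) (y2_of x) y"
    "perturbed_square (y1_of x) (y2_of x) y < (y^5 - y^4 + 1)^2"
    using quintic_sq_lower[OF \<open>5 \<le> y\<close>] by linarith+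
qed

lemma rational_factor_less:
  "(z^5 - z^4 - 1) / (z^7 * (y^5 - y^4 + 1)^2)
   < (z2_of x * z^4 - z^4 - 1) / (z1_of x * z^6 * perturbed_square (y1_of x) (y2_of x) y)"
proof -
  define W where "W = (y^5 - y^4 + 1)^2"
  define D where "D = perturbed_square (y1_of x) (y2_of x) y"
  define Zt where "Zt = z^5 - z^4 - 1"
  define Zn where "Zn = z2_of x * z^4 - z^4 - 1"
  have "0 < D" "D < W" using perturbed_square_range D_def W_def by simp_all
  have "0 < Zt" using quintic_pos[of z] mu_values_ordered Zt_def by simp
  have "Zn - Zt = (z2_of x - z) * z^4"
    unfolding Zn_def Zt_def by (simp add: algebra_simps power_numeral_reduce)
  moreover have "0 < (z2_of x - z) * z^4" using taylor_brackets(4) z_pos by simp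
  ultimately have "Zt < Zn" by linarith
  have "Zt / (z^7 * W) < Zn / (z^7 * W)"
    using \<open>Zt < Zn\<close> \<open>0 < D\<close> \<open>D < W\<close> z_pos by (intro divide_strict_right_mono) simp_all
  also have "\<dots> \<le> Zn / (z1_of x * z^6 * D)"
  proof (rule frac_le)
    have "z1_of x * D \<le> z * W"
      using taylor_brackets \<open>0 < D\<close> \<open>D < W\<close> by (intro mult_mono) simp_all
    then have "z^6 * (z1_of x * D) \<le> z^6 * (z * W)" using z_pos by (intro mult_left_mono) simp_all
    then show "z1_of x * z^6 * D \<le> z^7 * W" by (simp add: algebra_simps power_numeral_reduce)
  qed (use \<open>0 < Zt\<close> \<open>Zt < Zn\<close> \<open>0 < D\<close> taylor_brackets(5) z_pos in simp_all)
  finally show ?thesis unfolding W_def D_def Zt_def Zn_def .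
qed

lemma f_less_bound:
  "exp (x - 2*y + z) * (y^14 * (x^5 - x^4 - 1) * (z^5 - z^4 - 1)) / (x^7 * z^7 * (y^5 - y^4 + 1)^2)
   < Phi (x - 2 * y1_of x + z2_of x) * (x^5 - x^4 - 1) * y^14 * (z2_of x * z^4 - z^4 - 1)
     / (x^7 * perturbed_square (y1_of x) (y2_of x) y * z1_of x * z^6)"
proof -
  define C where "C = y^14 * (x^5 - x^4 - 1) / x^7"
  define D where "D = perturbed_square (y1_of x) (y2_of x) y"
  have "0 < C" using quintic_pos[of x] mu_values_ordered x_pos y_pos C_def by simp
  have "exp (x - 2*y + z) < Phi (x - 2 * y1_of x + z2_of x)"
    using exponent_comparison(1,2) exp_less_Phi by (meson exp_less_mono less_trans)
  moreover have "0 < Phi (x - 2 * y1_of x + z2_of x)"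
    using calculation exp_gt_zero[of "x - 2*y + z"] by linarith
  ultimately have exp_C: "exp (x - 2*y + z) * C < Phi (x - 2 * y1_of x + z2_of x) * C"
    and Phi_C: "0 < Phi (x - 2 * y1_of x + z2_of x) * C"
    using \<open>0 < C\<close> by simp_all
  have "0 \<le> (z^5 - z^4 - 1) / (z^7 * (y^5 - y^4 + 1)^2)"
    using quintic_pos[of z] mu_values_ordered z_pos by simp
  from mult_strict_mono[OF exp_C rational_factor_less Phi_C this]
  have "exp (x - 2*y + z) * C * ((z^5 - z^4 - 1) / (z^7 * (y^5 - y^4 + 1)^2))
      < Phi (x - 2 * y1_of x + z2_of x) * C * ((z2_of x * z^4 - z^4 - 1) / (z1_of x * z^6 * D))"
    unfolding D_def .
  moreover have "exp (x - 2*y + z) * C * ((z^5 - z^4 - 1) / (z^7 * (y^5 - y^4 + 1)^2))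
      = exp (x - 2*y + z) * (y^14 * (x^5 - x^4 - 1) * (z^5 - z^4 - 1)) / (x^7 * z^7 * (y^5 - y^4 + 1)^2)"
    unfolding C_def by (simp add: field_simps)
  moreover have "Phi (x - 2 * y1_of x + z2_of x) * C * ((z2_of x * z^4 - z^4 - 1) / (z1_of x * z^6 * D))
      = Phi (x - 2 * y1_of x + z2_of x) * (x^5 - x^4 - 1) * y^14 * (z2_of x * z^4 - z^4 - 1)
          / (x^7 * D * z1_of x * z^6)"
    unfolding C_def by (simp add: field_simps)
  ultimately show ?thesis unfolding D_def by simp
qed

lemma bound_less_one:
  "Phi (x - 2 * y1_of x + z2_of x) * (x^5 - x^4 - 1) * y^14 * (z2_of x * z^4 - z^4 - 1)
     / (x^7 * perturbed_square (y1_of x) (y2_of x) y * z1_of x * z^6) < 1"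
proof -
  define P where "P = Phi (x - 2 * y1_of x + z2_of x)"
  define E where "E = ((pi/x)^2)^6"
  define M where "M = x^5 * perturbed_square (y1_of x) (y2_of x) y * z1_of x * z^4"
  have "0 < M" using x_pos z_pos perturbed_square_range taylor_brackets M_def by simp
  have "0 < P" using exp_less_Phi[OF exponent_comparison(2)] exp_gt_zero[of "x - 2 * y1_of x + z2_of x"] P_def
    by linarith
  have "P * (x^5 - x^4 - 1) * y^14 * (z2_of x * z^4 - z^4 - 1)
      = (P * y^4) * ((x^5 - x^4 - 1) * y^10 * (z2_of x * z^4 - z^4 - 1))"
    by (simp add: algebra_simps power_numeral_reduce)
  also have "\<dots> \<le> (P * y^4) * ((1 + 5*E) * M)"
  proof (rule mult_left_mono)
    show "(x^5 - x^4 - 1) * y^10 * (z2_of x * z^4 - z^4 - 1) \<le> (1 + 5*E) * M"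
      using numerator_le_perturbed_denominator[OF mu_values_ordered taylor_brackets(1-4)
          order_eq_refl[OF taylor_gaps(1)[OF x_pos]] order_eq_refl[OF taylor_gaps(2)[OF x_pos]]
          ratio_sixth_power_bounds]
      unfolding E_def M_def .
    show "0 \<le> P * y^4" using \<open>0 < P\<close> y_pos by simp
  qed
  also have "\<dots> = (P * (1 + 5*E) * y^4) * M" by (simp only: mult_ac)
  also have "\<dots> < (x^2 * z^2) * M"
    using exponent_comparison(3) \<open>0 < M\<close> unfolding P_def E_def by (rule mult_strict_right_mono)
  also have "\<dots> = x^7 * perturbed_square (y1_of x) (y2_of x) y * z1_of x * z^6"
    unfolding M_def by (simp add: algebra_simps power_numeral_reduce)
  finally have "P * (x^5 - x^4 - 1) * y^14 * (z2_of x * z^4 - z^4 - 1)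
      < x^7 * perturbed_square (y1_of x) (y2_of x) y * z1_of x * z^6" .
  moreover have "0 < x^7 * perturbed_square (y1_of x) (y2_of x) y * z1_of x * z^6"
    using x_pos z_pos perturbed_square_range taylor_brackets by simp
  ultimately show ?thesis unfolding P_def by (simp add: divide_less_eq_1_pos)
qed

end

theorem lemma3p4:
  fixes n :: nat
  assumes "n \<ge> 4"
  shows "f3p4 n < bound3p4 n \<and> bound3p4 n < 1"
proof -
  define x where "x = mu (real n - 1)"
  define y where "y = mu (real n)"
  define z where "z = mu (real n + 1)"
  have "0 < x" "0 < y" "0 < z" using assms by (simp_all add: x_def y_def z_def mu_def)
  have x_sq: "x^2 = pi^2 * (real n - 1)"
    using assms by (simp add: x_def mu_def power_mult_distrib)
  then have "3*pi^2 \<le> x^2" using assms by simp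
  moreover have "y^2 = x^2 + pi^2" "z^2 = x^2 + 2*pi^2"
    using assms x_sq by (simp_all add: y_def z_def mu_def power_mult_distrib algebra_simps)
  ultimately have "f3p4 n < bound3p4 n" "bound3p4 n < 1"
    using f_less_bound[of x y z] bound_less_one[of x y z] \<open>0 < x\<close> \<open>0 < y\<close> \<open>0 < z\<close>
    unfolding f3p4_def bound3p4_def Let_def perturbed_square_def x_def y_def z_def
    by simp_all
  then show ?thesis ..
qed

end
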